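(* Let $S_1$ and $S_2$ be two finite collections of nonvertical line segments in the plane with $|S_1\cup S_2|=n$, such that no two segments of $S_1$ intersect (segments of $S_2$ may intersect each other). Then the number of intersection points between a segment of $S_1$ and a segment of $S_2$ that lie on an envelope (lower or upper) of $S_1$ and also on an envelope (lower or upper) of $S_2$ is $O(n)$.
   Context: For a finite collection $S$ of nonvertical segments (viewed as graphs of partial functions $\mathbb R\to\mathbb R$), the lower envelope is the pointwise minimum of these graphs (the parts visible from $y=-\infty$), and the upper envelope is the pointwise maximum (the parts visible from $y=+\infty$). *)

theory Defs
  imports "HOL-Analysis.Analysis"
begin

definition nonvertical_segment :: "(real \<times> real) set \<Rightarrow> bool" where
  "nonvertical_segment s \<longleftrightarrow> (\<exists>a b. fst a \<noteq> fst b \<and> s = closed_segment a b)"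

definition on_lower_envelope :: "(real \<times> real) set set \<Rightarrow> real \<times> real \<Rightarrow> bool" where
  "on_lower_envelope S p \<longleftrightarrow>
     (\<exists>s\<in>S. p \<in> s) \<and> (\<forall>s\<in>S. \<forall>q\<in>s. fst q = fst p \<longrightarrow> snd p \<le> snd q)"

definition on_upper_envelope :: "(real \<times> real) set set \<Rightarrow> real \<times> real \<Rightarrow> bool" where
  "on_upper_envelope S p \<longleftrightarrow>
     (\<exists>s\<in>S. p \<in> s) \<and> (\<forall>s\<in>S. \<forall>q\<in>s. fst q = fst p \<longrightarrow> snd q \<le> snd p)"

definition on_envelope :: "(real \<times> real) set set \<Rightarrow> real \<times> real \<Rightarrow> bool" where
  "on_envelope S p \<longleftrightarrow> on_lower_envelope S p \<or> on_upper_envelope S p"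

end

theory Submission
  imports Defs
begin

text \<open>Let X be the set of abscissae of segment endpoints, so |X| \<le> 2n, and fix which envelope
(lower or upper) of S1 and which envelope of S2 is meant; a point on a fixed envelope is determined
by its abscissa. Inside a closed interval free of X every segment meeting the corresponding
vertical strip crosses it completely, and since the segments of S1 are disjoint they keep their
vertical order there, so the envelope of S1 in the strip lies on a single segment s1. Three
crossing points p, q, r in one such strip, with abscissae in increasing order, are impossible:
p and r lie on s1, while the segment s2 of S2 meeting s1 only at q crosses the line of s1
transversally at q and hence lies on opposite sides of s1 above p and above r, so it cannot be on
the envelope side of S2 at both. So each gap of X carries at most two points, X itself at most |X|,
and each of the four choices of envelopes contributes O(n) points.\<close>

lemma closed_segment_nonvertical_graph:
  fixes a b :: "real \<times> real"
  assumes "fst a < fst b"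
  shows "\<exists>\<alpha> \<beta>. closed_segment a b = (\<lambda>x. (x, \<alpha> + \<beta> * x)) ` {fst a..fst b}"
proof -
  define d where "d = fst b - fst a"
  define \<beta> where "\<beta> = (snd b - snd a) / d"
  define \<alpha> where "\<alpha> = snd a - \<beta> * fst a"
  have "d > 0" using assms by (simp add: d_def)
  have param: "(1 - u) *\<^sub>R a + u *\<^sub>R b = (\<lambda>x. (x, \<alpha> + \<beta> * x)) (d * u + fst a)" for u
  proof -
    have "\<alpha> + \<beta> * (d * u + fst a) = snd a + u * (\<beta> * d)" by (simp add: \<alpha>_def algebra_simps)
    also have "\<beta> * d = snd b - snd a" using \<open>d > 0\<close> by (simp add: \<beta>_def)
    finally show ?thesis by (simp add: prod_eq_iff d_def algebra_simps)
  qed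
  have "closed_segment a b = (\<lambda>x. (x, \<alpha> + \<beta> * x)) ` ((\<lambda>u. d * u + fst a) ` {0..1})"
    unfolding closed_segment_image_interval param image_image ..
  also have "(\<lambda>u. d * u + fst a) ` {0..1} = {fst a..fst b}"
    using \<open>d > 0\<close> by (simp add: image_affinity_atLeastAtMost d_def)
  finally show ?thesis by blast
qed

lemma nonvertical_segment_graph:
  assumes "nonvertical_segment s"
  shows "\<exists>\<alpha> \<beta> l r. l < r \<and> s = (\<lambda>x. (x, \<alpha> + \<beta> * x)) ` {l..r}"
proof -
  obtain a b where "fst a \<noteq> fst b" "s = closed_segment a b"
    using assms unfolding nonvertical_segment_def by blast
  then consider "fst a < fst b" "s = closed_segment a b" | "fst b < fst a" "s = closed_segment b a"
    by (metis closed_segment_commute linorder_neq_iff)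
  then show ?thesis by cases (metis closed_segment_nonvertical_graph)+
qed

definition endpoint_abscissae :: "(real \<times> real) set set \<Rightarrow> real set" where
  "endpoint_abscissae S = (\<Union>s\<in>S. {Inf (fst ` s), Sup (fst ` s)})"

lemma card_endpoint_abscissae_le: "finite S \<Longrightarrow> card (endpoint_abscissae S) \<le> 2 * card S"
proof -
  assume "finite S"
  then have "card (endpoint_abscissae S) \<le> (\<Sum>s\<in>S. card {Inf (fst ` s), Sup (fst ` s)})"
    unfolding endpoint_abscissae_def by (rule card_UN_le)
  also have "\<dots> \<le> (\<Sum>s\<in>S. 2)" by (intro sum_mono) (simp add: card_insert_le_m1)
  finally show ?thesis by simp
qed

lemma nonvertical_segment_across_gap:
  assumes "\<forall>s\<in>S. nonvertical_segment s" and "{lo..hi} \<inter> endpoint_abscissae S = {}"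
    and "s \<in> S" "z \<in> s" "fst z \<in> {lo..hi}"
  shows "\<exists>\<alpha> \<beta>. (\<forall>z\<in>s. snd z = \<alpha> + \<beta> * fst z) \<and> (\<forall>x\<in>{lo..hi}. (x, \<alpha> + \<beta> * x) \<in> s)"
proof -
  obtain \<alpha> \<beta> l r where "l < r" and s: "s = (\<lambda>x. (x, \<alpha> + \<beta> * x)) ` {l..r}"
    using nonvertical_segment_graph assms(1,3) by blast
  have "fst ` s = {l..r}" unfolding s image_image by simp
  with \<open>l < r\<close> have "Inf (fst ` s) = l" "Sup (fst ` s) = r" by simp_all
  then have "l \<notin> {lo..hi}" "r \<notin> {lo..hi}"
    using assms(2,3) unfolding endpoint_abscissae_def by blast+
  moreover have "fst z \<in> {l..r}" using assms(4) \<open>fst ` s = {l..r}\<close> by blast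
  ultimately have "{lo..hi} \<subseteq> {l..r}" using assms(5) by auto
  then show ?thesis unfolding s by (intro exI[of _ \<alpha>] exI[of _ \<beta>]) auto
qed

lemma affine_root_between:
  fixes A B a c \<sigma> :: real
  assumes "\<sigma> \<noteq> 0" and "0 \<le> \<sigma> * (A + B * a)" and "\<sigma> * (A + B * c) \<le> 0"
  shows "\<exists>x. min a c \<le> x \<and> x \<le> max a c \<and> A + B * x = 0"
proof -
  have "\<sigma>\<^sup>2 * ((A + B * a) * (A + B * c)) \<le> 0"
    using mult_nonneg_nonpos[OF assms(2,3)] by (simp add: power2_eq_square algebra_simps)
  then have sign_change: "(A + B * a) * (A + B * c) \<le> 0"
    using assms(1) by (simp add: mult_le_0_iff)
  show ?thesis
  proof (cases "B = 0")
    case True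
    then show ?thesis using sign_change by (intro exI[of _ a]) (auto simp: mult_le_0_iff)
  next
    case False
    define x where "x = - A / B"
    have "(A + B * a) * (A + B * c) = B\<^sup>2 * ((a - x) * (c - x))"
      using False unfolding x_def by (simp add: field_simps power2_eq_square)
    with sign_change False have "(a - x) * (c - x) \<le> 0" by (simp add: mult_le_0_iff)
    then have "min a c \<le> x \<and> x \<le> max a c" by (auto simp: mult_le_0_iff)
    moreover have "A + B * x = 0" using False unfolding x_def by simp
    ultimately show ?thesis by blast
  qed
qed

definition on_signed_envelope :: "real \<Rightarrow> (real \<times> real) set set \<Rightarrow> real \<times> real \<Rightarrow> bool" where
  "on_signed_envelope \<sigma> S p \<longleftrightarrow>
     (\<exists>s\<in>S. p \<in> s) \<and> (\<forall>s\<in>S. \<forall>z\<in>s. fst z = fst p \<longrightarrow> 0 \<le> \<sigma> * (snd z - snd p))"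

lemma on_envelope_iff_signed:
  "on_envelope S p \<longleftrightarrow> on_signed_envelope 1 S p \<or> on_signed_envelope (-1) S p"
  unfolding on_envelope_def on_lower_envelope_def on_upper_envelope_def on_signed_envelope_def
  by auto

lemma on_signed_envelope_unique:
  assumes "\<sigma> \<noteq> 0" and "on_signed_envelope \<sigma> S p" "on_signed_envelope \<sigma> S p'" and "fst p = fst p'"
  shows "p = p'"
proof -
  obtain s s' where "s \<in> S" "p \<in> s" "s' \<in> S" "p' \<in> s'"
    using assms(2,3) unfolding on_signed_envelope_def by blast
  then have "0 \<le> \<sigma> * (snd p' - snd p)" "0 \<le> \<sigma> * (snd p - snd p')"
    using assms(2-4) unfolding on_signed_envelope_def by auto
  then have "\<sigma> * (snd p - snd p') = 0" by (auto simp: algebra_simps)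
  with assms(1,4) show ?thesis by (simp add: prod_eq_iff)
qed

lemma signed_envelope_in_gap_on_segment:
  assumes disj: "\<forall>s\<in>S. \<forall>t\<in>S. s \<noteq> t \<longrightarrow> s \<inter> t = {}"
    and nv: "\<forall>s\<in>S. nonvertical_segment s"
    and gap: "{lo..hi} \<inter> endpoint_abscissae S = {}"
    and "\<sigma> \<noteq> 0" and env_q: "on_signed_envelope \<sigma> S q" and env_w: "on_signed_envelope \<sigma> S w"
    and "s \<in> S" "q \<in> s" and q_gap: "fst q \<in> {lo..hi}" and w_gap: "fst w \<in> {lo..hi}"
  shows "w \<in> s"
proof (rule ccontr)
  assume "w \<notin> s"
  obtain s' where "s' \<in> S" "w \<in> s'" using env_w unfolding on_signed_envelope_def by blast
  obtain \<alpha> \<beta> where line: "\<forall>z\<in>s. snd z = \<alpha> + \<beta> * fst z"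
    and span: "\<forall>x\<in>{lo..hi}. (x, \<alpha> + \<beta> * x) \<in> s"
    using nonvertical_segment_across_gap[OF nv gap \<open>s \<in> S\<close> \<open>q \<in> s\<close> q_gap] by blast
  obtain \<alpha>' \<beta>' where line': "\<forall>z\<in>s'. snd z = \<alpha>' + \<beta>' * fst z"
    and span': "\<forall>x\<in>{lo..hi}. (x, \<alpha>' + \<beta>' * x) \<in> s'"
    using nonvertical_segment_across_gap[OF nv gap \<open>s' \<in> S\<close> \<open>w \<in> s'\<close> w_gap] by blast
  have "0 \<le> \<sigma> * ((\<alpha> + \<beta> * fst w) - snd w)"
    using env_w \<open>s \<in> S\<close> span w_gap unfolding on_signed_envelope_def by fastforce
  then have at_w: "0 \<le> \<sigma> * ((\<alpha> - \<alpha>') + (\<beta> - \<beta>') * fst w)"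
    using line' \<open>w \<in> s'\<close> by (simp add: algebra_simps)
  have "0 \<le> \<sigma> * ((\<alpha>' + \<beta>' * fst q) - snd q)"
    using env_q \<open>s' \<in> S\<close> span' q_gap unfolding on_signed_envelope_def by fastforce
  then have at_q: "\<sigma> * ((\<alpha> - \<alpha>') + (\<beta> - \<beta>') * fst q) \<le> 0"
    using line \<open>q \<in> s\<close> by (simp add: algebra_simps)
  obtain x where x: "min (fst w) (fst q) \<le> x" "x \<le> max (fst w) (fst q)"
    and "(\<alpha> - \<alpha>') + (\<beta> - \<beta>') * x = 0"
    using affine_root_between[OF \<open>\<sigma> \<noteq> 0\<close> at_w at_q] by blast
  then have "\<alpha> + \<beta> * x = \<alpha>' + \<beta>' * x" by (simp add: algebra_simps)
  moreover have "x \<in> {lo..hi}" using x q_gap w_gap by auto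
  ultimately have "(x, \<alpha> + \<beta> * x) \<in> s \<inter> s'" using span span' by (metis IntI)
  moreover have "s \<noteq> s'" using \<open>w \<in> s'\<close> \<open>w \<notin> s\<close> by blast
  ultimately show False using disj \<open>s \<in> S\<close> \<open>s' \<in> S\<close> by blast
qed

lemma no_three_envelope_crossings_in_gap:
  assumes disj: "\<forall>s\<in>S1. \<forall>t\<in>S1. s \<noteq> t \<longrightarrow> s \<inter> t = {}"
    and nv: "\<forall>s\<in>S1 \<union> S2. nonvertical_segment s"
    and gap: "{fst p..fst r} \<inter> endpoint_abscissae (S1 \<union> S2) = {}"
    and pq: "fst p < fst q" and qr: "fst q < fst r"
    and "s1 \<in> S1" "s2 \<in> S2" and crossing: "s1 \<inter> s2 = {q}"
    and "\<sigma>1 \<noteq> 0" "\<sigma>2 \<noteq> 0"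
    and env1: "on_signed_envelope \<sigma>1 S1 p" "on_signed_envelope \<sigma>1 S1 q" "on_signed_envelope \<sigma>1 S1 r"
    and env2_p: "on_signed_envelope \<sigma>2 S2 p" and env2_r: "on_signed_envelope \<sigma>2 S2 r"
  shows False
proof -
  have "q \<in> s1" "q \<in> s2" using crossing by auto
  have in_gap: "fst p \<in> {fst p..fst r}" "fst q \<in> {fst p..fst r}" "fst r \<in> {fst p..fst r}"
    using pq qr by auto
  have gap1: "{fst p..fst r} \<inter> endpoint_abscissae S1 = {}"
    using gap unfolding endpoint_abscissae_def by blast
  have "p \<in> s1" "r \<in> s1"
    using signed_envelope_in_gap_on_segment[OF disj _ gap1 \<open>\<sigma>1 \<noteq> 0\<close> env1(2) _ \<open>s1 \<in> S1\<close>]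
      \<open>q \<in> s1\<close> env1(1,3) nv in_gap by blast+
  obtain \<alpha>1 \<beta>1 where line1: "\<forall>z\<in>s1. snd z = \<alpha>1 + \<beta>1 * fst z"
    using nonvertical_segment_across_gap[OF nv gap _ \<open>q \<in> s1\<close>] \<open>s1 \<in> S1\<close> in_gap(2) by blast
  obtain \<alpha>2 \<beta>2 where line2: "\<forall>z\<in>s2. snd z = \<alpha>2 + \<beta>2 * fst z"
    and span2: "\<forall>x\<in>{fst p..fst r}. (x, \<alpha>2 + \<beta>2 * x) \<in> s2"
    using nonvertical_segment_across_gap[OF nv gap _ \<open>q \<in> s2\<close>] \<open>s2 \<in> S2\<close> in_gap(2) by blast
  have lines_meet_at_q: "\<alpha>1 + \<beta>1 * fst q = \<alpha>2 + \<beta>2 * fst q"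
    using line1 line2 \<open>q \<in> s1\<close> \<open>q \<in> s2\<close> by metis
  have side: "0 \<le> \<sigma>2 * (\<beta>2 - \<beta>1) * (fst w - fst q)"
    if "w \<in> s1" "on_signed_envelope \<sigma>2 S2 w" "fst w \<in> {fst p..fst r}" for w
  proof -
    have "0 \<le> \<sigma>2 * ((\<alpha>2 + \<beta>2 * fst w) - snd w)"
      using that(2,3) span2 \<open>s2 \<in> S2\<close> unfolding on_signed_envelope_def by fastforce
    moreover have "(\<alpha>2 + \<beta>2 * fst w) - snd w = (\<beta>2 - \<beta>1) * (fst w - fst q)"
      using line1 \<open>w \<in> s1\<close> lines_meet_at_q by (simp add: algebra_simps)
    ultimately show ?thesis by (simp add: mult.assoc)
  qed
  have "\<sigma>2 * (\<beta>2 - \<beta>1) \<le> 0" using side[OF \<open>p \<in> s1\<close> env2_p] in_gap pq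
    by (simp add: zero_le_mult_iff)
  moreover have "\<sigma>2 * (\<beta>2 - \<beta>1) \<ge> 0" using side[OF \<open>r \<in> s1\<close> env2_r] in_gap qr
    by (simp add: zero_le_mult_iff)
  ultimately have "\<beta>1 = \<beta>2" using \<open>\<sigma>2 \<noteq> 0\<close> by simp
  then have "\<alpha>1 = \<alpha>2" using lines_meet_at_q by simp
  then have "p \<in> s2"
    using span2 line1 \<open>p \<in> s1\<close> \<open>\<beta>1 = \<beta>2\<close> in_gap by (metis prod.collapse)
  then have "p = q" using crossing \<open>p \<in> s1\<close> by blast
  then show False using pq by simp
qed

lemma card_le_2_if_no_increasing_triple:
  fixes F :: "'a::linorder set"
  assumes "finite F" and "\<And>a b c. a \<in> F \<Longrightarrow> b \<in> F \<Longrightarrow> c \<in> F \<Longrightarrow> a < b \<Longrightarrow> b < c \<Longrightarrow> False"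
  shows "card F \<le> 2"
proof (cases "F = {}")
  case False
  have "F \<subseteq> {Min F, Max F}"
  proof
    fix b assume "b \<in> F"
    then have "Min F \<le> b" "b \<le> Max F" "Min F \<in> F" "Max F \<in> F"
      using \<open>finite F\<close> False by simp_all
    then show "b \<in> {Min F, Max F}"
      using assms(2)[of "Min F" b "Max F"] \<open>b \<in> F\<close> by fastforce
  qed
  then have "card F \<le> card {Min F, Max F}" by (simp add: card_mono)
  also have "\<dots> \<le> 2" by (simp add: card_insert_le_m1)
  finally show ?thesis .
qed simp

lemma card_le_if_no_three_in_gap:
  fixes A X :: "'a::linorder set"
  assumes "finite A" "finite X" "A \<inter> X = {}"
    and no_three: "\<And>a b c. a \<in> A \<Longrightarrow> b \<in> A \<Longrightarrow> c \<in> A \<Longrightarrow> a < b \<Longrightarrow> b < c \<Longrightarrow>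
      {a..c} \<inter> X = {} \<Longrightarrow> False"
  shows "card A \<le> 2 * (card X + 1)"
proof -
  define rank where "rank a = card {x\<in>X. x < a}" for a
  have rank_le: "rank a \<le> card X" for a
    unfolding rank_def using \<open>finite X\<close> by (intro card_mono) auto
  have rank_less: "rank a < rank c" if "a \<in> A" "c \<in> A" "a < c" "x \<in> X" "x \<in> {a..c}" for a c x
  proof -
    have "x \<noteq> a" "x \<noteq> c" using that \<open>A \<inter> X = {}\<close> by auto
    then have "x \<in> {y\<in>X. y < c} - {y\<in>X. y < a}" using that by auto
    moreover have "{y\<in>X. y < a} \<subseteq> {y\<in>X. y < c}" using \<open>a < c\<close> by auto
    ultimately have "{y\<in>X. y < a} \<subset> {y\<in>X. y < c}" by blast
    then show ?thesis unfolding rank_def using \<open>finite X\<close> by (intro psubset_card_mono) auto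
  qed
  have fibre: "card {a\<in>A. rank a = k} \<le> 2" for k
  proof (rule card_le_2_if_no_increasing_triple)
    fix a b c assume a: "a \<in> {a\<in>A. rank a = k}" and b: "b \<in> {a\<in>A. rank a = k}"
      and c: "c \<in> {a\<in>A. rank a = k}" and "a < b" "b < c"
    have "{a..c} \<inter> X = {}"
    proof (rule ccontr)
      assume "{a..c} \<inter> X \<noteq> {}"
      then obtain x where "x \<in> X" "x \<in> {a..c}" by blast
      then have "rank a < rank c" using rank_less a c \<open>a < b\<close> \<open>b < c\<close> by force
      then show False using a c by simp
    qed
    then show False using no_three a b c \<open>a < b\<close> \<open>b < c\<close> by blast
  qed (use \<open>finite A\<close> in simp)
  have "A = (\<Union>k\<in>{0..card X}. {a\<in>A. rank a = k})" using rank_le by auto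
  then have "card A \<le> (\<Sum>k\<in>{0..card X}. card {a\<in>A. rank a = k})"
    by (metis card_UN_le finite_atLeastAtMost)
  also have "\<dots> \<le> (\<Sum>k\<in>{0..card X}. 2)" using fibre by (rule sum_mono)
  finally show ?thesis by simp
qed

lemma finite_single_crossings:
  assumes "finite S1" "finite S2"
  shows "finite {p. \<exists>s1\<in>S1. \<exists>s2\<in>S2. s1 \<inter> s2 = {p}}"
proof (rule finite_subset)
  show "{p. \<exists>s1\<in>S1. \<exists>s2\<in>S2. s1 \<inter> s2 = {p}} \<subseteq> (\<lambda>(s1, s2). the_elem (s1 \<inter> s2)) ` (S1 \<times> S2)"
  proof
    fix p assume "p \<in> {p. \<exists>s1\<in>S1. \<exists>s2\<in>S2. s1 \<inter> s2 = {p}}"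
    then obtain s1 s2 where "s1 \<in> S1" "s2 \<in> S2" "s1 \<inter> s2 = {p}" by blast
    then show "p \<in> (\<lambda>(s1, s2). the_elem (s1 \<inter> s2)) ` (S1 \<times> S2)"
      by (intro image_eqI[where x = "(s1, s2)"]) auto
  qed
qed (use assms in simp)

lemma card_signed_envelope_crossings_le:
  assumes "finite S1" "finite S2"
    and nv: "\<forall>s\<in>S1 \<union> S2. nonvertical_segment s"
    and disj: "\<forall>s\<in>S1. \<forall>t\<in>S1. s \<noteq> t \<longrightarrow> s \<inter> t = {}"
    and "\<sigma>1 \<noteq> 0" "\<sigma>2 \<noteq> 0"
  shows "card {p. (\<exists>s1\<in>S1. \<exists>s2\<in>S2. s1 \<inter> s2 = {p})
                  \<and> on_signed_envelope \<sigma>1 S1 p \<and> on_signed_envelope \<sigma>2 S2 p}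
           \<le> 8 * card (S1 \<union> S2)"
    (is "card ?P \<le> _")
proof (cases "?P = {}")
  case False
  define X where "X = endpoint_abscissae (S1 \<union> S2)"
  have env: "on_signed_envelope \<sigma>1 S1 w" "on_signed_envelope \<sigma>2 S2 w" if "w \<in> ?P" for w
    using that by simp_all
  have "finite ?P" using finite_single_crossings[OF assms(1,2)] by (rule rev_finite_subset) blast
  have "finite X" unfolding X_def endpoint_abscissae_def using assms(1,2) by simp
  define F where "F = fst ` ?P"
  have "inj_on fst ?P"
    using on_signed_envelope_unique[OF \<open>\<sigma>1 \<noteq> 0\<close> env(1) env(1)] by (rule inj_onI)
  then have "card ?P = card F" unfolding F_def by (rule card_image[symmetric])
  also have "\<dots> \<le> card (F \<inter> X) + card (F - X)"
    using card_Un_le[of "F \<inter> X" "F - X"] by (simp add: Int_Diff_Un)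
  also have "card (F \<inter> X) \<le> card X" using \<open>finite X\<close> by (simp add: card_mono)
  also have "card (F - X) \<le> 2 * (card X + 1)"
  proof (rule card_le_if_no_three_in_gap)
    fix a b c assume "a \<in> F - X" "b \<in> F - X" "c \<in> F - X"
      and "a < b" "b < c" and gap: "{a..c} \<inter> X = {}"
    then obtain p q r where "p \<in> ?P" "q \<in> ?P" "r \<in> ?P" and "a = fst p" "b = fst q" "c = fst r"
      unfolding F_def by (elim DiffE imageE) blast
    moreover obtain s1 s2 where "s1 \<in> S1" "s2 \<in> S2" "s1 \<inter> s2 = {q}" using \<open>q \<in> ?P\<close> by blast
    ultimately show False
      using no_three_envelope_crossings_in_gap[OF disj nv _ _ _ _ _ _ \<open>\<sigma>1 \<noteq> 0\<close> \<open>\<sigma>2 \<noteq> 0\<close>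
          env(1)[of p] env(1)[of q] env(1)[of r] env(2)[of p] env(2)[of r]]
        gap \<open>a < b\<close> \<open>b < c\<close> unfolding X_def by simp
  qed (use \<open>finite ?P\<close> \<open>finite X\<close> in \<open>simp_all add: F_def, blast\<close>)
  also have "card X \<le> 2 * card (S1 \<union> S2)"
    unfolding X_def using assms(1,2) by (simp add: card_endpoint_abscissae_le)
  finally have "card ?P \<le> 6 * card (S1 \<union> S2) + 2" by simp
  moreover have "card (S1 \<union> S2) \<ge> 1"
    using False assms(1,2) by (auto simp: Suc_le_eq card_gt_0_iff)
  ultimately show ?thesis by linarith
qed (metis card.empty zero_le)

theorem lemma2:
  shows "\<exists>C::real. \<forall>S1 S2 :: (real \<times> real) set set.
     finite S1 \<and> finite S2 \<and>
     (\<forall>s\<in>S1 \<union> S2. nonvertical_segment s) \<and>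
     (\<forall>s\<in>S1. \<forall>t\<in>S1. s \<noteq> t \<longrightarrow> s \<inter> t = {}) \<longrightarrow>
     real (card {p. (\<exists>s1\<in>S1. \<exists>s2\<in>S2. s1 \<inter> s2 = {p})
                    \<and> on_envelope S1 p \<and> on_envelope S2 p})
       \<le> C * real (card (S1 \<union> S2))"
proof (intro exI[of _ 32] allI impI, elim conjE)
  fix S1 S2 :: "(real \<times> real) set set"
  assume hyps: "finite S1" "finite S2" "\<forall>s\<in>S1 \<union> S2. nonvertical_segment s"
    "\<forall>s\<in>S1. \<forall>t\<in>S1. s \<noteq> t \<longrightarrow> s \<inter> t = {}"
  define P where "P \<sigma>1 \<sigma>2 = {p. (\<exists>s1\<in>S1. \<exists>s2\<in>S2. s1 \<inter> s2 = {p})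
                    \<and> on_signed_envelope \<sigma>1 S1 p \<and> on_signed_envelope \<sigma>2 S2 p}" for \<sigma>1 \<sigma>2 :: real
  have bound: "card (P \<sigma>1 \<sigma>2) \<le> 8 * card (S1 \<union> S2)" if "\<sigma>1 \<noteq> 0" "\<sigma>2 \<noteq> 0" for \<sigma>1 \<sigma>2
    unfolding P_def using card_signed_envelope_crossings_le[OF hyps that] .
  have "{p. (\<exists>s1\<in>S1. \<exists>s2\<in>S2. s1 \<inter> s2 = {p}) \<and> on_envelope S1 p \<and> on_envelope S2 p}
          = (P 1 1 \<union> P 1 (-1)) \<union> (P (-1) 1 \<union> P (-1) (-1))"
    unfolding P_def on_envelope_iff_signed by auto
  also have "card \<dots> \<le> card (P 1 1 \<union> P 1 (-1)) + card (P (-1) 1 \<union> P (-1) (-1))"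
    by (rule card_Un_le)
  also have "\<dots> \<le> (card (P 1 1) + card (P 1 (-1))) + (card (P (-1) 1) + card (P (-1) (-1)))"
    by (intro add_mono card_Un_le)
  also have "\<dots> \<le> 32 * card (S1 \<union> S2)"
    using bound[of 1 1] bound[of 1 "-1"] bound[of "-1" 1] bound[of "-1" "-1"] by simp
  finally show "real (card {p. (\<exists>s1\<in>S1. \<exists>s2\<in>S2. s1 \<inter> s2 = {p}) \<and> on_envelope S1 p \<and> on_envelope S2 p})
       \<le> 32 * real (card (S1 \<union> S2))" by linarith
qed

end
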